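(* Let $G$ be a finite two-player zero-sum extensive form game with perfect recall, and run CFR or CFR$^+$ with alternating updates (Player 1 updated first) on $G$. Let $t\ge 0$ and let $p$ be the player about to be updated at time $t$, let $\sigma^t_p$ be $p$'s current strategy, and let $\sigma_o$ be the opponent strategy used in $p$'s update values, i.e. $\sigma_o=\sigma^t_2$ if $p=1$ and $\sigma_o=\sigma^{t+1}_1$ if $p=2$. Then for every information set $I$ of player $p$ and every $a\in A(I)$, $$v^{(\sigma^{t+1}_p,\sigma_o)}(I)_a\ge v^{(\sigma^t_p,\sigma_o)}(I)_a.$$
   Context: Extensive form game: a finite tree of histories $h$ (sequences of actions from the root $\emptyset$), terminal histories $Z$, actions $A(h)$ at nonterminal $h$, an acting player $P(h)\in\{1,2,c\}$ where $c$ is chance acting with fixed probabilities, utilities $u_1(z)=-u_2(z)$ at terminals, and for each player a partition of that player's histories into information sets $I$ (all $h\in I$ share the same legal actions $A(I)$). Perfect recall: any two histories in one information set of player $p$ pass through the same sequence of player-$p$ information sets and player-$p$ actions. A strategy $\sigma_p$ gives a distribution $\boldsymbol{\sigma}_p(I)$ over $A(I)$ for each player-$p$ information set. For a profile $\boldsymbol{\sigma}$ and terminal $z$, $\pi^{\boldsymbol\sigma}_{-p}(z)$ is the product of the probabilities of all actions on the path to $z$ taken by chance and by $p$'s opponent; for $h\sqsubseteq z$, $\pi^{\boldsymbol\sigma}_p(z\mid h)$ is the product of the probabilities under $\sigma_p$ of player $p$'s actions on the path from $h$ to $z$. Counterfactual values: $v^{\boldsymbol\sigma}_p(h):=\sum_{z\in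 Z,\,h\sqsubseteq z}\pi^{\boldsymbol\sigma}_{-p}(z)\pi^{\boldsymbol\sigma}_p(z\mid h)u_p(z)$, and for an information set $I$ of player $p$ the vector $\boldsymbol{v}^{\boldsymbol\sigma}(I)$ with components $v^{\boldsymbol\sigma}(I)_a:=\sum_{h\in I}v^{\boldsymbol\sigma}_p(ha)$, $a\in A(I)$. Let $x^+=\max(x,0)$ componentwise and $\boldsymbol{\sigma}_{\mathrm{rm}}(\boldsymbol{x}):=\boldsymbol{x}^+/(\boldsymbol{1}\cdot\boldsymbol{x}^+)$ if some $x_a>0$, else $\boldsymbol{1}/|A|$. CFR with alternating updates keeps for each information set $I$ a vector $\boldsymbol{r}^t(I)$ with $\boldsymbol{r}^0(I)=\boldsymbol 0$, plays $\boldsymbol\sigma^t(I)=\boldsymbol{\sigma}_{\mathrm{rm}}(\boldsymbol{r}^t(I))$, and updates $\boldsymbol{r}^{t+1}(I)=\boldsymbol{r}^t(I)+\boldsymbol{v}^t(I)-(\boldsymbol\sigma^t(I)\cdot\boldsymbol{v}^t(I))\boldsymbol 1$; CFR$^+$ instead keeps $\boldsymbol{q}^t(I)$ with $\boldsymbol{q}^0(I)=\boldsymbol 0$, $\boldsymbol\sigma^t(I)=\boldsymbol{\sigma}_{\mathrm{rm}}(\boldsymbol{q}^t(I))$, $\boldsymbol{q}^{t+1}(I)=(\boldsymbol{q}^t(I)+\boldsymbol{v}^t(I)-(\boldsymbol\sigma^t(I)\cdot\boldsymbol{v}^t(I))\boldsymbol 1)^+$. In both, the update values are $\boldsymbol{v}^t(I)=\boldsymbol{v}^{(\sigma^t_1,\sigma^t_2)}(I)$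 if $I$ belongs to Player 1 and $\boldsymbol{v}^t(I)=\boldsymbol{v}^{(\sigma^{t+1}_1,\sigma^t_2)}(I)$ if $I$ belongs to Player 2 (so Player 1's new strategy $\sigma^{t+1}_1$ is computed first). *)

theory Defs
  imports Complex_Main "HOL-Library.Sublist"
begin

datatype player = P1 | P2 | Chance

text \<open>Histories are action lists; hist is the
set of histories of the tree; pl gives the acting player; chance gives chance
probabilities; info maps a (non-chance, nonterminal) history to its information
set (a set of histories, i.e. the block of the partition containing it);
util is Player 1's utility at terminal histories (u_2 = - u_1).\<close>
record 'a efg =
  hist :: "'a list set"
  pl :: "'a list \<Rightarrow> player"
  chance :: "'a list \<Rightarrow> 'a \<Rightarrow> real"
  info :: "'a list \<Rightarrow> 'a list set"
  util :: "'a list \<Rightarrow> real"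

definition acts :: "'a efg \<Rightarrow> 'a list \<Rightarrow> 'a set" where
  "acts G h = {a. h @ [a] \<in> hist G}"

definition terminals :: "'a efg \<Rightarrow> 'a list set" where
  "terminals G = {h \<in> hist G. acts G h = {}}"

definition nonterm :: "'a efg \<Rightarrow> 'a list set" where
  "nonterm G = hist G - terminals G"

definition infosets :: "'a efg \<Rightarrow> player \<Rightarrow> 'a list set set" where
  "infosets G p = info G ` {h \<in> nonterm G. pl G h = p}"

text \<open>Legal actions A(I) of an information set (common to all its histories).\<close>
definition actsI :: "'a efg \<Rightarrow> 'a list set \<Rightarrow> 'a set" where
  "actsI G I = acts G (SOME h. h \<in> I)"

definition own_seq :: "'a efg \<Rightarrow> player \<Rightarrow> 'a list \<Rightarrow> ('a list set \<times> 'a) list" where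
  "own_seq G p h = map (\<lambda>i. (info G (take i h), h ! i))
      (filter (\<lambda>i. pl G (take i h) = p) [0..<length h])"

definition wf_efg :: "'a efg \<Rightarrow> bool" where
  "wf_efg G \<longleftrightarrow>
     finite (hist G) \<and> [] \<in> hist G \<and>
     (\<forall>h a. h @ [a] \<in> hist G \<longrightarrow> h \<in> hist G) \<and>
     (\<forall>h \<in> nonterm G. pl G h = Chance \<longrightarrow>
        (\<forall>a \<in> acts G h. chance G h a \<ge> 0) \<and> sum (chance G h) (acts G h) = 1) \<and>
     (\<forall>h \<in> nonterm G. pl G h \<noteq> Chance \<longrightarrow>
        h \<in> info G h \<and>
        (\<forall>h' \<in> info G h. h' \<in> nonterm G \<and> pl G h' = pl G h \<and> info G h' = info G h
                          \<and> acts G h' = acts G h)) \<and>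
     (\<forall>h \<in> nonterm G. \<forall>h' \<in> nonterm G. pl G h \<noteq> Chance \<longrightarrow> pl G h' = pl G h \<longrightarrow>
        info G h = info G h' \<longrightarrow> own_seq G (pl G h) h = own_seq G (pl G h) h')"

type_synonym 'a strat = "'a list set \<Rightarrow> 'a \<Rightarrow> real"

definition act_prob :: "'a efg \<Rightarrow> 'a strat \<times> 'a strat \<Rightarrow> 'a list \<Rightarrow> 'a \<Rightarrow> real" where
  "act_prob G \<sigma> h a = (case pl G h of Chance \<Rightarrow> chance G h a
                                   | P1 \<Rightarrow> fst \<sigma> (info G h) a
                                   | P2 \<Rightarrow> snd \<sigma> (info G h) a)"

definition u :: "'a efg \<Rightarrow> player \<Rightarrow> 'a list \<Rightarrow> real" where
  "u G p z = (if p = P1 then util G z else - util G z)"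

definition pi_opp :: "'a efg \<Rightarrow> 'a strat \<times> 'a strat \<Rightarrow> player \<Rightarrow> 'a list \<Rightarrow> real" where
  "pi_opp G \<sigma> p z = (\<Prod>i \<in> {i. i < length z \<and> pl G (take i z) \<noteq> p}.
                        act_prob G \<sigma> (take i z) (z ! i))"

definition pi_own :: "'a efg \<Rightarrow> 'a strat \<times> 'a strat \<Rightarrow> player \<Rightarrow> 'a list \<Rightarrow> 'a list \<Rightarrow> real" where
  "pi_own G \<sigma> p h z = (\<Prod>i \<in> {i. length h \<le> i \<and> i < length z \<and> pl G (take i z) = p}.
                        act_prob G \<sigma> (take i z) (z ! i))"

definition cfv_hist :: "'a efg \<Rightarrow> 'a strat \<times> 'a strat \<Rightarrow> player \<Rightarrow> 'a list \<Rightarrow> real" where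
  "cfv_hist G \<sigma> p h = (\<Sum>z \<in> {z \<in> terminals G. prefix h z}.
                          pi_opp G \<sigma> p z * pi_own G \<sigma> p h z * u G p z)"

definition cfv :: "'a efg \<Rightarrow> 'a strat \<times> 'a strat \<Rightarrow> player \<Rightarrow> 'a list set \<Rightarrow> 'a \<Rightarrow> real" where
  "cfv G \<sigma> p I a = (\<Sum>h \<in> I. cfv_hist G \<sigma> p (h @ [a]))"

definition sigma_rm :: "'a set \<Rightarrow> ('a \<Rightarrow> real) \<Rightarrow> 'a \<Rightarrow> real" where
  "sigma_rm A x a = (if a \<in> A then
      (if \<exists>b \<in> A. x b > 0 then max (x a) 0 / (\<Sum>b \<in> A. max (x b) 0)
       else 1 / real (card A))
    else 0)"

definition strat_of :: "'a efg \<Rightarrow> 'a strat \<Rightarrow> 'a strat" where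
  "strat_of G R I = sigma_rm (actsI G I) (R I)"

definition comp :: "'a strat \<times> 'a strat \<Rightarrow> player \<Rightarrow> 'a strat" where
  "comp \<sigma> p = (if p = P1 then fst \<sigma> else snd \<sigma>)"

text \<open>Update of the regret vectors (cfrplus = False: CFR, cfrplus = True: CFR+) of all
information sets of player p, with update values computed under profile sigma.\<close>
definition upd :: "bool \<Rightarrow> 'a efg \<Rightarrow> player \<Rightarrow> 'a strat \<times> 'a strat \<Rightarrow> 'a strat \<Rightarrow> 'a strat" where
  "upd cfrplus G p \<sigma> R = (\<lambda>I a. if I \<in> infosets G p then
      (let x = R I a + cfv G \<sigma> p I a
               - (\<Sum>b \<in> actsI G I. comp \<sigma> p I b * cfv G \<sigma> p I b)
       in if cfrplus then max x 0 else x)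
    else R I a)"

text \<open>One alternating iteration: Player 1 updated first with (sigma_1^t, sigma_2^t),
then Player 2 with (sigma_1^{t+1}, sigma_2^t).\<close>
definition cfr_step :: "bool \<Rightarrow> 'a efg \<Rightarrow> 'a strat \<Rightarrow> 'a strat" where
  "cfr_step cfrplus G R = (let R1 = upd cfrplus G P1 (strat_of G R, strat_of G R) R
                        in upd cfrplus G P2 (strat_of G R1, strat_of G R) R1)"

definition regrets :: "bool \<Rightarrow> 'a efg \<Rightarrow> nat \<Rightarrow> 'a strat" where
  "regrets cfrplus G t = (cfr_step cfrplus G ^^ t) (\<lambda>_ _. 0)"

text \<open>sigma^t: on each player's information sets, that player's strategy at time t.\<close>
definition cfr_sigma :: "bool \<Rightarrow> 'a efg \<Rightarrow> nat \<Rightarrow> 'a strat" where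
  "cfr_sigma cfrplus G t = strat_of G (regrets cfrplus G t)"

end

(* Fix the strategies of chance and of the opponent. By perfect recall, every history of player
   p determines the sequence of p's own (information set, action) pairs on its path, and the
   counterfactual value of (I, a) is a sequence-form value: the sum over the terminal histories
   whose own sequence extends that of I followed by (I, a), weighted by the reach of chance and
   the opponent and by p's probabilities for its own remaining actions. These values satisfy a
   one-step recursion over p's information sets, so by induction on the remaining depth a new
   strategy improves all of them as soon as, at every information set K of p, its expected value
   against the old values cfv(K, _) is at least that of the old strategy.
   Regret matching has this local property: the update adds the instantaneous regrets
   d_b = v_b - sigma . v (CFR+ then clips at 0), so the positive part of each regret moves in the
   direction of d_b; the expected value of d is 0 under the old strategy and hence, by this
   alignment, nonnegative under the new one.
   With alternating updates, Player 2's update values are computed against Player 1's new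
   strategy, so in both cases the update values are those of the profile with opponent sigma_o. *)

theory Submission
  imports Defs
begin

section \<open>Own sequences\<close>

lemma own_seq_take:
  assumes "i \<le> length z"
  shows "own_seq G p (take i z) =
     map (\<lambda>j. (info G (take j z), z ! j)) (filter (\<lambda>j. pl G (take j z) = p) [0..<i])"
proof -
  have "filter (\<lambda>j. pl G (take j (take i z)) = p) [0..<i] = filter (\<lambda>j. pl G (take j z) = p) [0..<i]"
    by (rule filter_cong) (auto simp: min_def)
  then show ?thesis
    unfolding own_seq_def using assms by (auto simp: min_def intro!: map_cong)
qed

lemma own_seq_append_drop:
  assumes "i \<le> length z"
  shows "own_seq G p z = own_seq G p (take i z) @
     map (\<lambda>j. (info G (take j z), z ! j)) (filter (\<lambda>j. pl G (take j z) = p) [i..<length z])"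
proof -
  have "[0..<length z] = [0..<i] @ [i..<length z]"
    using upt_add_eq_append[of 0 i "length z - i"] assms by simp
  then show ?thesis using own_seq_take[OF assms, of G p] unfolding own_seq_def by simp
qed

lemma own_seq_snoc:
  "own_seq G p (h @ [a]) = own_seq G p h @ (if pl G h = p then [(info G h, a)] else [])"
  using own_seq_append_drop[of "length h" "h @ [a]" G p] by simp

lemma prefix_own_seq:
  assumes "prefix h z"
  shows "prefix (own_seq G p h) (own_seq G p z)"
proof -
  obtain r where "z = h @ r" using assms prefixE by blast
  then show ?thesis using own_seq_append_drop[of "length h" z G p] by simp
qed

lemma length_own_seq_less:
  assumes "pl G h = p" and "prefix (h @ [a]) h'"
  shows "length (own_seq G p h) < length (own_seq G p h')"
  using prefix_length_le[OF prefix_own_seq[OF assms(2), of G p]] assms(1)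
  by (simp add: own_seq_snoc)

lemma prefix_snoc_own_seqD:
  assumes "prefix (s @ [x]) (own_seq G p z)"
  shows "\<exists>i < length z. pl G (take i z) = p \<and> x = (info G (take i z), z ! i)
    \<and> own_seq G p (take i z) = s"
  using assms
proof (induction z rule: rev_induct)
  case Nil
  then show ?case by (simp add: own_seq_def)
next
  case (snoc c z)
  show ?case
  proof (cases "prefix (s @ [x]) (own_seq G p z)")
    case True
    then show ?thesis using snoc.IH by (force simp: nth_append)
  next
    case False
    then have "pl G z = p" "s @ [x] = own_seq G p z @ [(info G z, c)]"
      using snoc.prems by (auto simp: own_seq_snoc split: if_splits)
    then show ?thesis by (intro exI[of _ "length z"]) auto
  qed
qed

section \<open>Well-formed games\<close>

lemma finite_hist: "wf_efg G \<Longrightarrow> finite (hist G)"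
  unfolding wf_efg_def by blast

lemma finite_terminals:
  assumes "wf_efg G"
  shows "finite (terminals G)"
  using finite_hist[OF assms] unfolding terminals_def by simp

lemma finite_acts:
  assumes "wf_efg G"
  shows "finite (acts G h)"
proof -
  have "finite ((\<lambda>a. h @ [a]) -` hist G)"
    by (rule finite_vimageI) (use finite_hist[OF assms] in \<open>auto simp: inj_def\<close>)
  then show ?thesis by (simp add: acts_def vimage_def)
qed

lemma hist_prefix_closed:
  assumes wf: "wf_efg G" and "z \<in> hist G" and "prefix h z"
  shows "h \<in> hist G"
proof -
  obtain r where "z = h @ r" using assms(3) prefixE by blast
  with assms(2) show ?thesis
  proof (induction r arbitrary: z rule: rev_induct)
    case (snoc c r)
    then show ?case using wf unfolding wf_efg_def by (metis append_assoc)
  qed simp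
qed

lemma take_nonterm:
  assumes wf: "wf_efg G" and "z \<in> hist G" and "i < length z"
  shows "take i z \<in> nonterm G" "z ! i \<in> acts G (take i z)"
proof -
  have "take i z @ [z ! i] \<in> hist G"
    using hist_prefix_closed[OF wf assms(2)] assms(3) by (metis take_Suc_conv_app_nth take_is_prefix)
  then show "z ! i \<in> acts G (take i z)" "take i z \<in> nonterm G"
    using hist_prefix_closed[OF wf] unfolding acts_def nonterm_def terminals_def by auto
qed

lemma self_in_info:
  "wf_efg G \<Longrightarrow> h \<in> nonterm G \<Longrightarrow> pl G h \<noteq> Chance \<Longrightarrow> h \<in> info G h"
  unfolding wf_efg_def by blast

lemma info_memberD:
  assumes wf: "wf_efg G" and h: "h \<in> nonterm G" "pl G h \<noteq> Chance" and h': "h' \<in> info G h"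
  shows "h' \<in> nonterm G" "pl G h' = pl G h" "info G h' = info G h" "acts G h' = acts G h"
    "own_seq G (pl G h) h' = own_seq G (pl G h) h"
proof -
  show *: "h' \<in> nonterm G" "pl G h' = pl G h" "info G h' = info G h" "acts G h' = acts G h"
    using wf h h' unfolding wf_efg_def by blast+
  show "own_seq G (pl G h) h' = own_seq G (pl G h) h"
    using wf h * unfolding wf_efg_def by metis
qed

lemma actsI_info:
  assumes "wf_efg G" "h \<in> nonterm G" "pl G h \<noteq> Chance"
  shows "actsI G (info G h) = acts G h"
  unfolding actsI_def using self_in_info[OF assms] info_memberD(4)[OF assms] by (metis someI)

lemma finite_nonempty_actsI:
  assumes "wf_efg G" "p \<noteq> Chance" "K \<in> infosets G p"
  shows "finite (actsI G K)" "actsI G K \<noteq> {}"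
proof -
  obtain g where g: "g \<in> nonterm G" "pl G g = p" "K = info G g"
    using assms(3) unfolding infosets_def by auto
  then have "actsI G K = acts G g" using actsI_info[OF assms(1)] assms(2) by simp
  then show "finite (actsI G K)" "actsI G K \<noteq> {}"
    using finite_acts[OF assms(1)] g(1) by (auto simp: nonterm_def terminals_def)
qed

lemma infosets_inj:
  assumes wf: "wf_efg G" and "p \<noteq> Chance" "q \<noteq> Chance"
    and "K \<in> infosets G p" "K \<in> infosets G q"
  shows "p = q"
proof -
  obtain g h where g: "g \<in> nonterm G" "pl G g = p" "K = info G g"
    and h: "h \<in> nonterm G" "pl G h = q" "K = info G h"
    using assms(4,5) unfolding infosets_def by auto
  have "h \<in> info G g" using self_in_info[OF wf h(1)] assms(3) g(3) h by simp
  then show ?thesis using info_memberD(2)[OF wf g(1)] assms(2) g(2) h(2) by simp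
qed

lemma act_prob_comp:
  "pl G h \<noteq> Chance \<Longrightarrow> act_prob G \<sigma> h a = comp \<sigma> (pl G h) (info G h) a"
  by (cases "pl G h") (auto simp: act_prob_def comp_def)

lemma prefix_snoc_own_seqE:
  assumes wf: "wf_efg G" and z: "z \<in> hist G" and pre: "prefix (s @ [(K, b)]) (own_seq G p z)"
  obtains h where "h \<in> nonterm G" "pl G h = p" "info G h = K" "own_seq G p h = s"
    "b \<in> acts G h" "prefix (h @ [b]) z"
proof -
  obtain i where i: "i < length z" "pl G (take i z) = p" "(K, b) = (info G (take i z), z ! i)"
    "own_seq G p (take i z) = s"
    using prefix_snoc_own_seqD[OF pre] by blast
  have "prefix (take i z @ [z ! i]) z"
    using i(1) by (metis take_Suc_conv_app_nth take_is_prefix)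
  with i take_nonterm[OF wf z i(1)] show ?thesis by (intro that[of "take i z"]) auto
qed

lemma eq_if_same_own_seq_on_path:
  assumes "pl G h = p" "pl G h' = p" "own_seq G p h = own_seq G p h'"
    and "prefix h z" "prefix h' z"
  shows "h = h'"
proof -
  have *: "h1 = h2" if "prefix h1 h2" "pl G h1 = p" "own_seq G p h1 = own_seq G p h2" for h1 h2
  proof (rule ccontr)
    assume "h1 \<noteq> h2"
    with that(1) obtain c r where "h2 = h1 @ c # r"
      by (metis append_Nil2 neq_Nil_conv prefixE)
    then have "length (own_seq G p h1) < length (own_seq G p h2)"
      by (intro length_own_seq_less[OF that(2), of c]) simp
    with that(3) show False by simp
  qed
  from assms(4,5) consider "prefix h h'" | "prefix h' h" using prefix_same_cases by blast
  then show ?thesis using *[of h h'] *[of h' h] assms(1-3) by cases auto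
qed

section \<open>Sequence form\<close>

type_synonym 'a sequence = "('a list set \<times> 'a) list"

definition seq_prob :: "'a strat \<Rightarrow> 'a sequence \<Rightarrow> real" where
  "seq_prob sp l = prod_list (map (\<lambda>(K, b). sp K b) l)"

lemma pi_own_eq_seq_prob:
  assumes "prefix h z" and p: "p \<noteq> Chance"
  shows "pi_own G \<sigma> p h z = seq_prob (comp \<sigma> p) (drop (length (own_seq G p h)) (own_seq G p z))"
proof -
  define P where "P = (\<lambda>j. pl G (take j z) = p)"
  define F where "F = (\<lambda>j. (info G (take j z), z ! j))"
  have h: "h = take (length h) z" "length h \<le> length z"
    using assms(1) by (auto simp: prefix_def)
  have "drop (length (own_seq G p h)) (own_seq G p z) = map F (filter P [length h..<length z])"
    using own_seq_append_drop[OF h(2), of G p] h(1) unfolding P_def F_def by simp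
  moreover have "seq_prob (comp \<sigma> p) (map F (filter P [length h..<length z]))
     = prod_list (map (\<lambda>j. act_prob G \<sigma> (take j z) (z ! j)) (filter P [length h..<length z]))"
    unfolding seq_prob_def map_map using p
    by (intro arg_cong[where f=prod_list] map_cong) (auto simp: F_def P_def act_prob_comp)
  moreover have "\<dots> = pi_own G \<sigma> p h z"
    unfolding pi_own_def P_def by (subst prod.distinct_set_conv_list[symmetric]) (auto intro: prod.cong)
  ultimately show ?thesis by simp
qed

definition terminals_after :: "'a efg \<Rightarrow> player \<Rightarrow> 'a sequence \<Rightarrow> 'a list set" where
  "terminals_after G p s = {z \<in> terminals G. prefix s (own_seq G p z)}"

definition seq_value ::
  "'a efg \<Rightarrow> player \<Rightarrow> ('a list \<Rightarrow> real) \<Rightarrow> 'a strat \<Rightarrow> 'a sequence \<Rightarrow> real" where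
  "seq_value G p w sp s = (\<Sum>z \<in> terminals_after G p s.
     w z * seq_prob sp (drop (length s) (own_seq G p z)) * u G p z)"

definition seq_extensions :: "'a efg \<Rightarrow> player \<Rightarrow> 'a sequence \<Rightarrow> ('a list set \<times> 'a) set" where
  "seq_extensions G p s = {x. terminals_after G p (s @ [x]) \<noteq> {}}"

lemma finite_seq_extensions:
  assumes "finite (terminals G)"
  shows "finite (seq_extensions G p s)"
proof -
  have "seq_extensions G p s \<subseteq> (\<lambda>z. own_seq G p z ! length s) ` terminals G"
    unfolding seq_extensions_def terminals_after_def
    by (force simp: prefix_def nth_append)
  then show ?thesis using assms finite_subset by blast
qed

lemma seq_value_not_extension: "x \<notin> seq_extensions G p s \<Longrightarrow> seq_value G p w sp (s @ [x]) = 0"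
  unfolding seq_value_def seq_extensions_def by simp

lemma seq_value_cong:
  "(\<And>z. z \<in> terminals G \<Longrightarrow> w z = w' z) \<Longrightarrow> seq_value G p w sp s = seq_value G p w' sp s"
  unfolding seq_value_def terminals_after_def by (auto intro: sum.cong)

lemma seq_value_unfold:
  assumes fin: "finite (terminals G)"
  shows "seq_value G p w sp s = (\<Sum>z \<in> {z \<in> terminals G. own_seq G p z = s}. w z * u G p z)
     + (\<Sum>x \<in> seq_extensions G p s. sp (fst x) (snd x) * seq_value G p w sp (s @ [x]))"
proof -
  define E where "E = {z \<in> terminals G. own_seq G p z = s}"
  define T where "T = (\<lambda>z. w z * seq_prob sp (drop (length s) (own_seq G p z)) * u G p z)"
  let ?Z = "terminals_after G p" and ?N = "seq_extensions G p s"
  have finZ: "finite (?Z s')" for s' using fin unfolding terminals_after_def by simp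
  have split: "?Z s = E \<union> (\<Union>x \<in> ?N. ?Z (s @ [x]))"
  proof (intro set_eqI iffI)
    fix z assume z: "z \<in> ?Z s"
    then obtain r where r: "own_seq G p z = s @ r" unfolding terminals_after_def prefix_def by auto
    show "z \<in> E \<union> (\<Union>x \<in> ?N. ?Z (s @ [x]))"
    proof (cases r)
      case (Cons x r')
      with r z have "z \<in> ?Z (s @ [x])" unfolding terminals_after_def by auto
      then show ?thesis unfolding seq_extensions_def by blast
    qed (use r z in \<open>auto simp: E_def terminals_after_def\<close>)
  qed (auto simp: E_def terminals_after_def seq_extensions_def
       intro: prefix_order.trans[OF prefix_prefix[of s]])
  have "E \<inter> (\<Union>x \<in> ?N. ?Z (s @ [x])) = {}"
    unfolding E_def terminals_after_def by (auto dest: prefix_length_le)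
  then have "seq_value G p w sp s = sum T E + sum T (\<Union>x \<in> ?N. ?Z (s @ [x]))"
    unfolding seq_value_def T_def[symmetric] split
    by (intro sum.union_disjoint) (use finZ fin finite_seq_extensions[OF fin] in \<open>auto simp: E_def\<close>)
  also have "sum T (\<Union>x \<in> ?N. ?Z (s @ [x])) = (\<Sum>x \<in> ?N. sum T (?Z (s @ [x])))"
  proof (rule sum.UNION_disjoint)
    show "\<forall>x \<in> ?N. \<forall>y \<in> ?N. x \<noteq> y \<longrightarrow> ?Z (s @ [x]) \<inter> ?Z (s @ [y]) = {}"
      unfolding terminals_after_def by (auto simp: prefix_def)
  qed (use finZ finite_seq_extensions[OF fin] in auto)
  also have "\<dots> = (\<Sum>x \<in> ?N. sp (fst x) (snd x) * seq_value G p w sp (s @ [x]))"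
    unfolding seq_value_def sum_distrib_left T_def terminals_after_def
    by (intro sum.cong refl) (auto simp: prefix_def seq_prob_def split: prod.splits)
  also have "sum T E = (\<Sum>z \<in> E. w z * u G p z)"
    by (rule sum.cong) (auto simp: T_def E_def seq_prob_def)
  finally show ?thesis unfolding E_def .
qed

lemma sum_group_by_fst:
  fixes f :: "'k \<times> 'b \<Rightarrow> 'c::comm_monoid_add"
  assumes "finite N" and "\<And>K. finite (B K)" and "\<And>K b. (K, b) \<in> N \<Longrightarrow> b \<in> B K"
    and "\<And>x. x \<notin> N \<Longrightarrow> f x = 0"
  shows "sum f N = (\<Sum>K \<in> fst ` N. \<Sum>b \<in> B K. f (K, b))"
proof -
  have "N \<subseteq> Sigma (fst ` N) B" using assms(3) by force
  then have "sum f N = sum f (Sigma (fst ` N) B)"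
    by (intro sum.mono_neutral_left) (use assms in auto)
  also have "\<dots> = (\<Sum>K \<in> fst ` N. \<Sum>b \<in> B K. f (K, b))"
    by (subst sum.Sigma) (use assms in auto)
  finally show ?thesis .
qed

lemma seq_value_mono:
  assumes fin: "finite (terminals G)"
    and nonneg: "\<And>K b. sp' K b \<ge> 0"
    and in_B: "\<And>s K b. (K, b) \<in> seq_extensions G p s \<Longrightarrow> b \<in> B K"
    and finB: "\<And>K. finite (B K)"
    and better: "\<And>s K b. (K, b) \<in> seq_extensions G p s \<Longrightarrow>
       (\<Sum>b' \<in> B K. sp K b' * seq_value G p w sp (s @ [(K, b')]))
       \<le> (\<Sum>b' \<in> B K. sp' K b' * seq_value G p w sp (s @ [(K, b')]))"
  shows "seq_value G p w sp s \<le> seq_value G p w sp' s"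
proof -
  define M where "M = Max (insert 0 ((\<lambda>z. length (own_seq G p z)) ` terminals G))"
  have depth: "length s \<le> M" if "x \<in> seq_extensions G p s" for s x
  proof -
    from that obtain z where "z \<in> terminals G" "prefix (s @ [x]) (own_seq G p z)"
      unfolding seq_extensions_def terminals_after_def by auto
    then have "length s < length (own_seq G p z)" "length (own_seq G p z) \<le> M"
      unfolding M_def using fin prefix_length_le by fastforce+
    then show ?thesis by simp
  qed
  show ?thesis
  proof (induction s rule: measure_induct_rule[of "\<lambda>s. Suc M - length s"])
    case (less s)
    let ?N = "seq_extensions G p s"
    let ?V = "seq_value G p w"
    have group: "(\<Sum>x \<in> ?N. q (fst x) (snd x) * ?V sp (s @ [x]))
        = (\<Sum>K \<in> fst ` ?N. \<Sum>b \<in> B K. q K b * ?V sp (s @ [(K, b)]))" for q :: "'a strat"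
      using sum_group_by_fst[OF finite_seq_extensions[OF fin] finB,
          where f="\<lambda>x. q (fst x) (snd x) * ?V sp (s @ [x])"]
      by (simp add: in_B seq_value_not_extension)
    have IH: "?V sp (s @ [x]) \<le> ?V sp' (s @ [x])" if "x \<in> ?N" for x
      using less depth[OF that] by simp
    have "(\<Sum>x \<in> ?N. sp (fst x) (snd x) * ?V sp (s @ [x]))
        \<le> (\<Sum>x \<in> ?N. sp' (fst x) (snd x) * ?V sp (s @ [x]))"
      unfolding group by (rule sum_mono) (auto intro: better)
    also have "\<dots> \<le> (\<Sum>x \<in> ?N. sp' (fst x) (snd x) * ?V sp' (s @ [x]))"
      by (intro sum_mono mult_left_mono) (auto simp: nonneg IH)
    finally show ?case
      using seq_value_unfold[OF fin, of p w sp s] seq_value_unfold[OF fin, of p w sp' s] by linarith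
  qed
qed

section \<open>Counterfactual values\<close>

lemma cfv_eq_seq_value:
  assumes wf: "wf_efg G" and p: "p \<noteq> Chance" and g: "g \<in> nonterm G" "pl G g = p"
  shows "cfv G \<sigma> p (info G g) a
    = seq_value G p (pi_opp G \<sigma> p) (comp \<sigma> p) (own_seq G p g @ [(info G g, a)])"
proof -
  define I where "I = info G g"
  define s where "s = own_seq G p g"
  define T where "T = (\<lambda>z. pi_opp G \<sigma> p z * seq_prob (comp \<sigma> p) (drop (Suc (length s)) (own_seq G p z))
    * u G p z)"
  define Z where "Z = (\<lambda>h. {z \<in> terminals G. prefix (h @ [a]) z})"
  have mem: "h \<in> nonterm G" "pl G h = p" "info G h = I" "own_seq G p h = s"
    "own_seq G p (h @ [a]) = s @ [(I, a)]" if "h \<in> I" for h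
    using info_memberD[OF wf g(1), of h] that g p unfolding I_def s_def by (auto simp: own_seq_snoc)
  have finI: "finite I"
    using finite_subset[OF _ finite_hist[OF wf]] mem(1) by (auto simp: nonterm_def)
  have "cfv G \<sigma> p I a = (\<Sum>h \<in> I. sum T (Z h))"
    unfolding cfv_def cfv_hist_def Z_def
    by (intro sum.cong refl) (auto simp: T_def pi_own_eq_seq_prob[OF _ p] mem(5))
  also have "\<dots> = sum T (\<Union>h \<in> I. Z h)"
  proof (rule sum.UNION_disjoint[symmetric])
    have "h1 = h2" if "h1 \<in> I" "h2 \<in> I" "z \<in> Z h1" "z \<in> Z h2" for h1 h2 z
      using that mem[OF that(1)] mem[OF that(2)] unfolding Z_def
      by (auto intro: eq_if_same_own_seq_on_path dest: append_prefixD)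
    then show "\<forall>h1\<in>I. \<forall>h2\<in>I. h1 \<noteq> h2 \<longrightarrow> Z h1 \<inter> Z h2 = {}" by blast
  qed (use finI finite_terminals[OF wf] in \<open>auto simp: Z_def\<close>)
  also have "(\<Union>h \<in> I. Z h) = terminals_after G p (s @ [(I, a)])"
  proof (intro set_eqI iffI)
    fix z assume "z \<in> (\<Union>h \<in> I. Z h)"
    then show "z \<in> terminals_after G p (s @ [(I, a)])"
      unfolding Z_def terminals_after_def by (auto dest: prefix_own_seq[of _ _ G p] simp: mem(5))
  next
    fix z assume z: "z \<in> terminals_after G p (s @ [(I, a)])"
    then obtain h where h: "h \<in> nonterm G" "pl G h = p" "info G h = I" "prefix (h @ [a]) z"
      using prefix_snoc_own_seqE[OF wf] unfolding terminals_after_def terminals_def by blast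
    then have "h \<in> I" using self_in_info[OF wf h(1)] p by simp
    with h z show "z \<in> (\<Union>h \<in> I. Z h)" unfolding Z_def terminals_after_def by auto
  qed
  finally show ?thesis unfolding seq_value_def T_def I_def s_def by simp
qed

lemma seq_extensionsE:
  assumes wf: "wf_efg G" and "(K, b) \<in> seq_extensions G p s"
  obtains h where "h \<in> nonterm G" "pl G h = p" "info G h = K" "own_seq G p h = s" "b \<in> acts G h"
proof -
  obtain z where "z \<in> terminals G" "prefix (s @ [(K, b)]) (own_seq G p z)"
    using assms(2) unfolding seq_extensions_def terminals_after_def by auto
  then show ?thesis
    using prefix_snoc_own_seqE[OF wf] that unfolding terminals_def by blast
qed

lemma cfv_cong:
  assumes "p \<noteq> Chance" and "comp \<sigma> p = comp \<sigma>' p"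
    and "\<And>z. z \<in> terminals G \<Longrightarrow> pi_opp G \<sigma> p z = pi_opp G \<sigma>' p z"
  shows "cfv G \<sigma> p I a = cfv G \<sigma>' p I a"
proof -
  have "pi_own G \<sigma> p h z = pi_own G \<sigma>' p h z" for h z
    unfolding pi_own_def using assms(1,2) by (intro prod.cong refl) (simp add: act_prob_comp)
  then show ?thesis
    unfolding cfv_def cfv_hist_def using assms(3) by (intro sum.cong refl) auto
qed

lemma pi_opp_cong:
  assumes wf: "wf_efg G" and z: "z \<in> hist G"
    and agree: "\<And>q K. q \<noteq> p \<Longrightarrow> q \<noteq> Chance \<Longrightarrow> K \<in> infosets G q \<Longrightarrow>
      comp \<sigma> q K = comp \<sigma>' q K"
  shows "pi_opp G \<sigma> p z = pi_opp G \<sigma>' p z"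
  unfolding pi_opp_def
proof (intro prod.cong refl)
  fix i assume i: "i \<in> {i. i < length z \<and> pl G (take i z) \<noteq> p}"
  then have K: "info G (take i z) \<in> infosets G (pl G (take i z))"
    using take_nonterm(1)[OF wf z] unfolding infosets_def by auto
  show "act_prob G \<sigma> (take i z) (z ! i) = act_prob G \<sigma>' (take i z) (z ! i)"
  proof (cases "pl G (take i z) = Chance")
    case False
    then show ?thesis using i agree[OF _ _ K] by (simp add: act_prob_comp)
  qed (simp add: act_prob_def)
qed

lemma cfv_mono_if_locally_better:
  assumes wf: "wf_efg G" and p: "p \<noteq> Chance" and I: "I \<in> infosets G p"
    and opp: "\<And>z. z \<in> terminals G \<Longrightarrow> pi_opp G \<sigma>' p z = pi_opp G \<sigma> p z"
    and nonneg: "\<And>K b. comp \<sigma>' p K b \<ge> 0"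
    and better: "\<And>K. K \<in> infosets G p \<Longrightarrow>
      (\<Sum>b \<in> actsI G K. comp \<sigma> p K b * cfv G \<sigma> p K b)
      \<le> (\<Sum>b \<in> actsI G K. comp \<sigma>' p K b * cfv G \<sigma> p K b)"
  shows "cfv G \<sigma> p I a \<le> cfv G \<sigma>' p I a"
proof -
  let ?w = "pi_opp G \<sigma> p"
  have cfv_seq: "cfv G \<tau> p (info G h) b
      = seq_value G p ?w (comp \<tau> p) (own_seq G p h @ [(info G h, b)])"
    if "\<tau> \<in> {\<sigma>, \<sigma>'}" "h \<in> nonterm G" "pl G h = p" for \<tau> h b
    using cfv_eq_seq_value[OF wf p that(2,3)] seq_value_cong[of G "pi_opp G \<tau> p" ?w] opp that(1)
    by auto
  have "seq_value G p ?w (comp \<sigma> p) s \<le> seq_value G p ?w (comp \<sigma>' p) s" for s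
  proof (rule seq_value_mono[OF finite_terminals[OF wf] nonneg])
    fix s K b assume "(K, b) \<in> seq_extensions G p s"
    then obtain h where h: "h \<in> nonterm G" "pl G h = p" "info G h = K" "own_seq G p h = s"
      "b \<in> acts G h"
      using seq_extensionsE[OF wf] by blast
    then show "b \<in> actsI G K" using actsI_info[OF wf] p by auto
    have K: "K \<in> infosets G p" using h unfolding infosets_def by auto
    have "cfv G \<sigma> p K b' = seq_value G p ?w (comp \<sigma> p) (s @ [(K, b')])" for b'
      using cfv_seq[of \<sigma> h b'] h by simp
    with better[OF K]
    show "(\<Sum>b' \<in> actsI G K. comp \<sigma> p K b' * seq_value G p ?w (comp \<sigma> p) (s @ [(K, b')]))
      \<le> (\<Sum>b' \<in> actsI G K. comp \<sigma>' p K b' * seq_value G p ?w (comp \<sigma> p) (s @ [(K, b')]))"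
      by simp
  qed (unfold actsI_def, rule finite_acts[OF wf])
  moreover obtain g where "g \<in> nonterm G" "pl G g = p" "I = info G g"
    using I unfolding infosets_def by auto
  ultimately show ?thesis using cfv_seq by simp
qed

section \<open>Regret matching\<close>

lemma sigma_rm_nonneg: "0 \<le> sigma_rm A x b"
  unfolding sigma_rm_def by (auto intro!: divide_nonneg_nonneg sum_nonneg)

lemma sum_max_0_pos:
  fixes x :: "'b \<Rightarrow> real"
  assumes "finite A" "b \<in> A" "0 < x b"
  shows "0 < (\<Sum>b \<in> A. max (x b) 0)"
  using assms by (intro sum_pos2[of A b]) auto

lemma sum_sigma_rm_mult:
  assumes "finite A"
  shows "(\<Sum>b \<in> A. sigma_rm A x b * d b) = (if \<exists>b \<in> A. 0 < x b
    then (\<Sum>b \<in> A. max (x b) 0 * d b) / (\<Sum>b \<in> A. max (x b) 0)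
    else (\<Sum>b \<in> A. d b) / real (card A))"
  by (auto simp: sigma_rm_def sum_divide_distrib intro: sum.cong)

lemma sum_sigma_rm:
  assumes "finite A" "A \<noteq> {}"
  shows "(\<Sum>b \<in> A. sigma_rm A x b) = 1"
  using sum_sigma_rm_mult[of A x "\<lambda>_. 1"] sum_max_0_pos[of A _ x] assms by auto

lemma max_0_update_aligned:
  fixes y d w :: real
  assumes "w = y + d \<or> w = max (y + d) 0"
  shows "0 \<le> (max w 0 - max y 0) * d"
proof (cases "0 \<le> d")
  case True
  then have "max y 0 \<le> max w 0" using assms by auto
  then show ?thesis using True by simp
next
  case False
  then have "max w 0 \<le> max y 0" using assms by auto
  then show ?thesis using False by (simp add: mult_nonpos_nonpos)
qed

lemma sigma_rm_improves:
  fixes A :: "'b set" and x y v :: "'b \<Rightarrow> real"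
  defines "c \<equiv> \<Sum>b \<in> A. sigma_rm A y b * v b"
  assumes fin: "finite A" and ne: "A \<noteq> {}"
    and upd: "\<And>b. b \<in> A \<Longrightarrow> x b = y b + (v b - c) \<or> x b = max (y b + (v b - c)) 0"
  shows "(\<Sum>b \<in> A. sigma_rm A y b * v b) \<le> (\<Sum>b \<in> A. sigma_rm A x b * v b)"
proof -
  define d where "d b = v b - c" for b
  define X where "X = (\<Sum>b \<in> A. max (x b) 0 * d b)"
  define Y where "Y = (\<Sum>b \<in> A. max (y b) 0 * d b)"
  have shift: "(\<Sum>b \<in> A. sigma_rm A z b * v b) = (\<Sum>b \<in> A. sigma_rm A z b * d b) + c" for z
    by (simp add: d_def right_diff_distrib sum_subtractf sum_distrib_right[symmetric] sum_sigma_rm fin ne)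
  have y0: "(\<Sum>b \<in> A. sigma_rm A y b * d b) = 0"
    using shift[of y] c_def by simp
  have aligned: "0 \<le> (max (x b) 0 - max (y b) 0) * d b" if "b \<in> A" for b
    using max_0_update_aligned upd[OF that] unfolding d_def by blast
  have XY: "X - Y = (\<Sum>b \<in> A. (max (x b) 0 - max (y b) 0) * d b)"
    unfolding X_def Y_def by (simp add: sum_subtractf left_diff_distrib)
  have Y0: "Y = 0"
  proof (cases "\<exists>b \<in> A. 0 < y b")
    case True
    then have "0 < (\<Sum>b \<in> A. max (y b) 0)" using sum_max_0_pos[OF fin] by blast
    moreover have "Y / (\<Sum>b \<in> A. max (y b) 0) = 0"
      using y0 True sum_sigma_rm_mult[OF fin, of y d] unfolding Y_def by simp
    ultimately show ?thesis by simp
  qed (auto simp: Y_def max_def intro!: sum.neutral)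
  have "0 \<le> (\<Sum>b \<in> A. sigma_rm A x b * d b)"
  proof (cases "\<exists>b \<in> A. 0 < x b")
    case True
    have "0 \<le> X - Y" unfolding XY by (rule sum_nonneg) (rule aligned)
    then have "0 \<le> X" using Y0 by simp
    then show ?thesis using True sum_sigma_rm_mult[OF fin, of x d] unfolding X_def
      by (simp add: sum_nonneg)
  next
    case False
    (* a positive regret y b0 can only drop to x b0 \<le> 0 if d b0 < 0, and then the aligned
       sum X - Y would be positive *)
    have "\<not> (\<exists>b \<in> A. 0 < y b)"
    proof
      assume "\<exists>b \<in> A. 0 < y b"
      then obtain b0 where b0: "b0 \<in> A" "0 < y b0" by blast
      with False upd[OF b0(1)] have "d b0 < 0" unfolding d_def by auto
      moreover have "max (x b0) 0 - max (y b0) 0 < 0" using False b0 by auto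
      ultimately have "0 < (max (x b0) 0 - max (y b0) 0) * d b0"
        by (simp add: mult_neg_neg)
      then have "0 < X - Y" unfolding XY by (rule sum_pos2[OF fin b0(1)]) (rule aligned)
      moreover have "X = 0" using False unfolding X_def by (auto simp: max_def intro!: sum.neutral)
      ultimately show False using Y0 by simp
    qed
    then have "(\<Sum>b \<in> A. sigma_rm A x b * d b) = (\<Sum>b \<in> A. sigma_rm A y b * d b)"
      using False sum_sigma_rm_mult[OF fin, of _ d] by simp
    then show ?thesis using y0 by simp
  qed
  then show ?thesis using shift[of x] shift[of y] y0 by linarith
qed

section \<open>Alternating CFR updates\<close>

lemma cfv_mono_regret_update:
  assumes wf: "wf_efg G" and p: "p \<noteq> Chance" and I: "I \<in> infosets G p"
    and "comp \<sigma> p = strat_of G R" and "comp \<sigma>' p = strat_of G R'"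
    and opp: "\<And>z. z \<in> terminals G \<Longrightarrow> pi_opp G \<sigma>' p z = pi_opp G \<sigma> p z"
    and update: "\<And>K. K \<in> infosets G p \<Longrightarrow> R' K = upd cfrplus G p \<sigma> R K"
  shows "cfv G \<sigma> p I a \<le> cfv G \<sigma>' p I a"
proof (rule cfv_mono_if_locally_better[OF wf p I opp])
  show "0 \<le> comp \<sigma>' p K b" for K b
    unfolding assms(5) strat_of_def by (rule sigma_rm_nonneg)
  fix K assume K: "K \<in> infosets G p"
  show "(\<Sum>b \<in> actsI G K. comp \<sigma> p K b * cfv G \<sigma> p K b)
    \<le> (\<Sum>b \<in> actsI G K. comp \<sigma>' p K b * cfv G \<sigma> p K b)"
    unfolding assms(4,5) strat_of_def
    by (rule sigma_rm_improves[OF finite_nonempty_actsI[OF wf p K]])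
       (auto simp: update[OF K] upd_def K assms(4) strat_of_def Let_def add_diff_eq)
qed

lemma upd_outside: "K \<notin> infosets G p \<Longrightarrow> upd cfrplus G p \<sigma> R K = R K"
  unfolding upd_def by auto

lemma upd_cong: "R K = R' K \<Longrightarrow> upd cfrplus G p \<sigma> R K = upd cfrplus G p \<sigma> R' K"
  unfolding upd_def by auto

lemma cfr_step_P1:
  assumes "wf_efg G" "K \<in> infosets G P1"
  shows "cfr_step cfrplus G R K = upd cfrplus G P1 (strat_of G R, strat_of G R) R K"
  using infosets_inj[OF assms(1) _ _ assms(2)] unfolding cfr_step_def Let_def
  by (subst upd_outside) auto

lemma cfr_step_P2:
  assumes "wf_efg G" "K \<in> infosets G P2"
  shows "cfr_step cfrplus G R K = upd cfrplus G P2
    (strat_of G (upd cfrplus G P1 (strat_of G R, strat_of G R) R), strat_of G R) R K"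
  using infosets_inj[OF assms(1) _ _ assms(2)] unfolding cfr_step_def Let_def
  by (intro upd_cong upd_outside) auto

lemma cfv_mono_cfr_step_P1:
  assumes wf: "wf_efg G" and I: "I \<in> infosets G P1"
  shows "cfv G (strat_of G R, strat_of G R) P1 I a
    \<le> cfv G (strat_of G (cfr_step cfrplus G R), strat_of G R) P1 I a"
proof (rule cfv_mono_regret_update[OF wf _ I])
  show "pi_opp G (strat_of G (cfr_step cfrplus G R), strat_of G R) P1 z
    = pi_opp G (strat_of G R, strat_of G R) P1 z" if "z \<in> terminals G" for z
    using that by (intro pi_opp_cong[OF wf]) (auto simp: terminals_def comp_def)
  show "cfr_step cfrplus G R K = upd cfrplus G P1 (strat_of G R, strat_of G R) R K"
    if "K \<in> infosets G P1" for K
    using cfr_step_P1[OF wf that] .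
qed (simp_all add: comp_def)

lemma cfv_mono_cfr_step_P2:
  assumes wf: "wf_efg G" and I: "I \<in> infosets G P2"
  shows "cfv G (strat_of G (cfr_step cfrplus G R), strat_of G R) P2 I a
    \<le> cfv G (strat_of G (cfr_step cfrplus G R), strat_of G (cfr_step cfrplus G R)) P2 I a"
proof -
  define R1 where "R1 = upd cfrplus G P1 (strat_of G R, strat_of G R) R"
  define \<sigma> where "\<sigma> = (strat_of G R1, strat_of G R)"
  (* Player 2's update leaves Player 1's regrets alone, so the Player 1 strategy used for
     Player 2's update values is the new one *)
  have P1_agree: "strat_of G (cfr_step cfrplus G R) K = strat_of G R1 K"
    if "K \<in> infosets G P1" for K
    using cfr_step_P1[OF wf that] unfolding R1_def strat_of_def by simp
  have opp: "pi_opp G (strat_of G (cfr_step cfrplus G R), \<tau>) P2 z = pi_opp G \<sigma> P2 z"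
    if "z \<in> terminals G" for z \<tau>
  proof (rule pi_opp_cong[OF wf])
    show "z \<in> hist G" using that by (simp add: terminals_def)
    fix q K assume "q \<noteq> P2" "q \<noteq> Chance" "K \<in> infosets G q"
    then show "comp (strat_of G (cfr_step cfrplus G R), \<tau>) q K = comp \<sigma> q K"
      using P1_agree by (cases q) (simp_all add: comp_def \<sigma>_def)
  qed
  have "cfv G (strat_of G (cfr_step cfrplus G R), strat_of G R) P2 I a = cfv G \<sigma> P2 I a"
    by (rule cfv_cong) (simp_all add: comp_def \<sigma>_def opp)
  also have "\<dots> \<le> cfv G (strat_of G (cfr_step cfrplus G R), strat_of G (cfr_step cfrplus G R))
    P2 I a"
    by (rule cfv_mono_regret_update[OF wf _ I, where R'="cfr_step cfrplus G R"])
       (simp_all add: comp_def \<sigma>_def opp cfr_step_P2[OF wf] R1_def)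
  finally show ?thesis .
qed

theorem lemma3:
  fixes G :: "'a efg" and cfrplus :: bool and t :: nat and p :: player
    and I :: "'a list set" and a :: 'a
  assumes "wf_efg G"
    and "p \<in> {P1, P2}"
    and "I \<in> infosets G p"
    and "a \<in> actsI G I"
  shows "let \<sigma>o = (if p = P1 then cfr_sigma cfrplus G t else cfr_sigma cfrplus G (Suc t));
             prof = (\<lambda>\<sigma>p. if p = P1 then (\<sigma>p, \<sigma>o) else (\<sigma>o, \<sigma>p))
         in cfv G (prof (cfr_sigma cfrplus G (Suc t))) p I a
              \<ge> cfv G (prof (cfr_sigma cfrplus G t)) p I a"
proof -
  (* the inequality holds for every action *)
  define R where "R = regrets cfrplus G t"
  have sigma: "cfr_sigma cfrplus G t = strat_of G R"
    "cfr_sigma cfrplus G (Suc t) = strat_of G (cfr_step cfrplus G R)"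
    unfolding cfr_sigma_def regrets_def R_def by simp_all
  show ?thesis
  proof (cases "p = P1")
    case True
    then show ?thesis
      using cfv_mono_cfr_step_P1[OF assms(1)] assms(3) unfolding sigma Let_def by simp
  next
    case False
    then have "p = P2" using assms(2) by simp
    then show ?thesis
      using cfv_mono_cfr_step_P2[OF assms(1)] assms(3) unfolding sigma Let_def by simp
  qed
qed

end
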